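(* If $G$ is a clique-uniform graph with respect to a clique partition $F$, with clique partition graph $P_G$, then $\mathcal E(\mathcal R_F)=\mathcal E(P_G)$.
   Context: All graphs are finite and simple, $V(G)=\{1,\dots,n\}$. A clique partition of $G$ is a set $F=\{C_1,\dots,C_k\}$ of cliques such that every edge lies in exactly one $C_j$; $G$ is clique-uniform if all $|C_j|$ are equal. $\mathcal M_F$ is the $n\times k$ $(0,1)$-matrix with $(i,j)$-entry $1$ iff $i\in C_j$, and $\mathcal R_F=\mathcal M_F^T\mathcal M_F$. The clique partition graph $P_G$ has vertex set $\{1,\dots,k\}$ with $i\neq j$ adjacent iff $C_i\cap C_j\neq\emptyset$. With $s_i^F=|C_i|$, $\mathcal E(\mathcal R_F)=\sum_{i=1}^k|\lambda_i(\mathcal R_F)-\frac1k\sum_{j=1}^k s_j^F|$, and $\mathcal E(P_G)=\sum_{i=1}^k|\lambda_i(P_G)|$ is the sum of absolute values of adjacency eigenvalues. *)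

theory Defs
  imports "Jordan_Normal_Form.Char_Poly" "HOL-Computational_Algebra.Fundamental_Theorem_Algebra"
begin

definition simple_graph :: "nat \<Rightarrow> (nat \<Rightarrow> nat \<Rightarrow> bool) \<Rightarrow> bool" where
  "simple_graph n E \<longleftrightarrow> (\<forall>u v. E u v \<longrightarrow> E v u) \<and> (\<forall>u. \<not> E u u)
     \<and> (\<forall>u v. E u v \<longrightarrow> u \<in> {1..n} \<and> v \<in> {1..n})"

definition is_clique :: "nat \<Rightarrow> (nat \<Rightarrow> nat \<Rightarrow> bool) \<Rightarrow> nat set \<Rightarrow> bool" where
  "is_clique n E S \<longleftrightarrow> S \<noteq> {} \<and> S \<subseteq> {1..n} \<and> (\<forall>u\<in>S. \<forall>v\<in>S. u \<noteq> v \<longrightarrow> E u v)"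

definition clique_partition :: "nat \<Rightarrow> (nat \<Rightarrow> nat \<Rightarrow> bool) \<Rightarrow> nat \<Rightarrow> (nat \<Rightarrow> nat set) \<Rightarrow> bool" where
  "clique_partition n E k C \<longleftrightarrow> inj_on C {..<k} \<and> (\<forall>j<k. is_clique n E (C j))
     \<and> (\<forall>u v. E u v \<longrightarrow> (\<exists>!j. j < k \<and> u \<in> C j \<and> v \<in> C j))"

definition clique_uniform :: "nat \<Rightarrow> (nat \<Rightarrow> nat set) \<Rightarrow> bool" where
  "clique_uniform k C \<longleftrightarrow> (\<forall>i<k. \<forall>j<k. card (C i) = card (C j))"

(* incidence matrix M_F (n x k); row i corresponds to vertex i+1 *)
definition inc_mat :: "nat \<Rightarrow> nat \<Rightarrow> (nat \<Rightarrow> nat set) \<Rightarrow> real mat" where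
  "inc_mat n k C = mat n k (\<lambda>(i, j). if i + 1 \<in> C j then 1 else 0)"

definition R_mat :: "nat \<Rightarrow> nat \<Rightarrow> (nat \<Rightarrow> nat set) \<Rightarrow> real mat" where
  "R_mat n k C = transpose_mat (inc_mat n k C) * inc_mat n k C"

definition PG_adj :: "nat \<Rightarrow> (nat \<Rightarrow> nat set) \<Rightarrow> real mat" where
  "PG_adj k C = mat k k (\<lambda>(i, j). if i \<noteq> j \<and> C i \<inter> C j \<noteq> {} then 1 else 0)"

definition eigvals :: "real mat \<Rightarrow> complex multiset" where
  "eigvals A = proots (char_poly (map_mat complex_of_real A))"

definition shifted_energy :: "real mat \<Rightarrow> real \<Rightarrow> real" where
  "shifted_energy A c = (\<Sum>z\<in>#eigvals A. cmod (z - complex_of_real c))"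

definition energy :: "real mat \<Rightarrow> real" where
  "energy A = shifted_energy A 0"

definition R_energy :: "nat \<Rightarrow> nat \<Rightarrow> (nat \<Rightarrow> nat set) \<Rightarrow> real" where
  "R_energy n k C = shifted_energy (R_mat n k C) ((\<Sum>j<k. real (card (C j))) / real k)"

end

theory Submission
  imports Defs
begin

text \<open>For a clique-uniform partition into cliques of size \<open>s\<close>, the Gram matrix
  \<open>R\<^sub>F = M\<^sub>F\<^sup>T M\<^sub>F\<close> has entries \<open>|C\<^sub>i \<inter> C\<^sub>j|\<close>. Two distinct cliques of an edge
  partition share at most one vertex (two common vertices would span an edge lying in
  both), so \<open>R\<^sub>F = A(P\<^sub>G) + s I\<close>, and \<open>s\<close> is the average clique size. Shifting a matrix by
  \<open>s I\<close> shifts its spectrum by \<open>s\<close>, hence the shifted energy of \<open>R\<^sub>F\<close> is the energy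
  of \<open>P\<^sub>G\<close>.\<close>

lemma proots_prod_linear_factors:
  "proots (\<Prod>a\<leftarrow>as. [:- a, 1:]) = mset (as :: 'a :: idom list)"
proof (induction as)
  case (Cons a as)
  have "proots ([:- a, 1:] * (\<Prod>a\<leftarrow>as. [:- a, 1:])) = {#a#} + mset as"
    by (subst proots_mult) (auto simp: Cons.IH)
  then show ?case by simp
qed simp

lemma poly_char_poly_add_scalar:
  fixes B :: "'a :: field mat"
  assumes B: "B \<in> carrier_mat m m"
  shows "poly (char_poly (B + c \<cdot>\<^sub>m 1\<^sub>m m)) x = poly (char_poly B) (x - c)"
proof -
  have "char_matrix (B + c \<cdot>\<^sub>m 1\<^sub>m m) x = char_matrix B (x - c)"
    unfolding char_matrix_def using B by (intro eq_matI) (auto simp: algebra_simps)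
  then show ?thesis
    using char_poly_matrix[OF B] char_poly_matrix[of "B + c \<cdot>\<^sub>m 1\<^sub>m m" m] B by simp
qed

lemma eigvals_add_scalar:
  assumes A: "A \<in> carrier_mat m m"
  shows "eigvals (A + c \<cdot>\<^sub>m 1\<^sub>m m) = image_mset (\<lambda>z. z + of_real c) (eigvals A)"
proof -
  define B where "B = map_mat complex_of_real A"
  have B: "B \<in> carrier_mat m m"
    using A by (simp add: B_def)
  have map_shift: "map_mat complex_of_real (A + c \<cdot>\<^sub>m 1\<^sub>m m) = B + of_real c \<cdot>\<^sub>m 1\<^sub>m m"
    using A by (intro eq_matI) (auto simp: B_def)
  obtain as where as: "char_poly B = (\<Prod>a\<leftarrow>as. [:- a, 1:])"
    using char_poly_factorized[OF B] by blast
  have "poly (char_poly (B + of_real c \<cdot>\<^sub>m 1\<^sub>m m)) x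
      = poly (\<Prod>a\<leftarrow>map (\<lambda>a. a + of_real c) as. [:- a, 1:]) x" for x
    unfolding poly_char_poly_add_scalar[OF B] as poly_prod_list by (simp add: o_def algebra_simps)
  then have shifted: "char_poly (B + of_real c \<cdot>\<^sub>m 1\<^sub>m m)
      = (\<Prod>a\<leftarrow>map (\<lambda>a. a + of_real c) as. [:- a, 1:])"
    using poly_eq_poly_eq_iff by blast
  show ?thesis
    unfolding eigvals_def map_shift shifted B_def[symmetric] as proots_prod_linear_factors by simp
qed

lemma shifted_energy_add_scalar:
  assumes "A \<in> carrier_mat m m"
  shows "shifted_energy (A + c \<cdot>\<^sub>m 1\<^sub>m m) c = energy A"
  using assms by (simp add: energy_def shifted_energy_def eigvals_add_scalar image_mset.compositionality o_def)

lemma sum_indicator_Suc: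
  assumes "S \<subseteq> {1..n}"
  shows "(\<Sum>l<n. if Suc l \<in> S then 1 else 0 :: real) = real (card S)"
proof -
  have "(\<Sum>l<n. if Suc l \<in> S then 1 else 0 :: real) = (\<Sum>x\<in>{1..n}. if x \<in> S then 1 else 0)"
    by (simp add: sum.atLeast1_atMost_eq)
  also have "\<dots> = real (card ({1..n} \<inter> S))"
    by (simp add: sum.If_cases)
  also have "{1..n} \<inter> S = S"
    using assms by blast
  finally show ?thesis .
qed

lemma R_mat_entry:
  assumes "C i \<subseteq> {1..n}" "i < k" "j < k"
  shows "R_mat n k C $$ (i, j) = real (card (C i \<inter> C j))"
proof -
  have "R_mat n k C $$ (i, j) = (\<Sum>l<n. if Suc l \<in> C i \<inter> C j then 1 else 0)"
    using assms(2,3) unfolding R_mat_def inc_mat_def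
    by (simp add: scalar_prod_def lessThan_atLeast0) (intro sum.cong, auto)
  also have "\<dots> = real (card (C i \<inter> C j))"
    using assms(1) by (intro sum_indicator_Suc) blast
  finally show ?thesis .
qed

lemma clique_partition_subset:
  "clique_partition n E k C \<Longrightarrow> j < k \<Longrightarrow> C j \<subseteq> {1..n}"
  by (simp add: clique_partition_def is_clique_def)

lemma clique_partition_card_Int:
  assumes cp: "clique_partition n E k C" and "i < k" "j < k" "i \<noteq> j"
  shows "card (C i \<inter> C j) = (if C i \<inter> C j \<noteq> {} then 1 else 0)"
proof -
  have fin: "finite (C i \<inter> C j)"
    using clique_partition_subset[OF cp \<open>i < k\<close>] by (meson finite_Int finite_atLeastAtMost finite_subset)
  have "u = v" if "u \<in> C i \<inter> C j" "v \<in> C i \<inter> C j" for u v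
  proof (rule ccontr)
    assume "u \<noteq> v"
    then have "E u v"
      using cp \<open>i < k\<close> that by (auto simp: clique_partition_def is_clique_def)
    then have "\<exists>!l. l < k \<and> u \<in> C l \<and> v \<in> C l"
      using cp by (simp add: clique_partition_def)
    then show False
      using that assms(2-4) by blast
  qed
  then have "card (C i \<inter> C j) \<le> 1"
    using card_le_Suc0_iff_eq[OF fin] by auto
  then show ?thesis
    using fin by (auto simp: le_Suc_eq)
qed

lemma clique_uniform_average:
  assumes "clique_uniform k C" "i < k"
  shows "(\<Sum>j<k. real (card (C j))) / real k = real (card (C i))"
proof -
  have "card (C j) = card (C i)" if "j \<in> {..<k}" for j
    using assms that unfolding clique_uniform_def by blast
  then have "(\<Sum>j<k. real (card (C j))) = (\<Sum>j<k. real (card (C i)))"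
    by (intro sum.cong) simp_all
  then show ?thesis
    using assms(2) by simp
qed

lemma R_mat_clique_uniform:
  assumes cp: "clique_partition n E k C" and cu: "clique_uniform k C"
  shows "R_mat n k C = PG_adj k C + ((\<Sum>j<k. real (card (C j))) / real k) \<cdot>\<^sub>m 1\<^sub>m k"
    (is "_ = ?S")
proof (rule eq_matI)
  fix i j assume "i < dim_row ?S" and "j < dim_col ?S"
  then have i: "i < k" and j: "j < k"
    by (auto simp: PG_adj_def)
  have R: "R_mat n k C $$ (i, j) = real (card (C i \<inter> C j))"
    using clique_partition_subset[OF cp i] i j by (rule R_mat_entry)
  show "R_mat n k C $$ (i, j) = ?S $$ (i, j)"
  proof (cases "i = j")
    case True
    then show ?thesis
      using R i clique_uniform_average[OF cu i] by (simp add: PG_adj_def)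
  next
    case False
    then show ?thesis
      using R i j clique_partition_card_Int[OF cp i j False] by (simp add: PG_adj_def)
  qed
qed (simp_all add: R_mat_def PG_adj_def inc_mat_def)

theorem mainTheorem10:
  fixes n k :: nat and E :: "nat \<Rightarrow> nat \<Rightarrow> bool" and C :: "nat \<Rightarrow> nat set"
  assumes "simple_graph n E"
    and "clique_partition n E k C"
    and "clique_uniform k C"
  shows "R_energy n k C = energy (PG_adj k C)"
proof -
  have "PG_adj k C \<in> carrier_mat k k"
    by (simp add: PG_adj_def)
  then show ?thesis
    unfolding R_energy_def R_mat_clique_uniform[OF assms(2,3)]
    by (rule shifted_energy_add_scalar)
qed

end
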